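(* Let $W$ be a nonnegative, integer-valued random variable with $p=\mathbb{P}(W=0)$. Let $N\sim\mathrm{Geom}(p)$ and suppose that either $W\leq_{hr}N$ or $N\leq_{hr}W$. Then $$d_{TV}(\mathcal{L}(W),\mathcal{L}(N))\leq\left|1-p(1+\mathbb{E}W)\right|.$$
   Context: $N\sim\mathrm{Geom}(p)$ means $\mathbb{P}(N=k)=p(1-p)^k$, $k\ge0$. For nonnegative integer-valued $T$, $r_T(j)=\mathbb{P}(T=j)/\mathbb{P}(T>j)$; $T\leq_{hr}U$ (hazard rate order) means $r_T(j)\geq r_U(j)$ for all $j$. $d_{TV}(\mathcal{L}(U),\mathcal{L}(V))=\sup_{A\subseteq\{0,1,2,\ldots\}}|\mathbb{P}(U\in A)-\mathbb{P}(V\in A)|$. *)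

theory Defs
  imports "HOL-Probability.Probability"
begin

definition hazard_rate :: "nat pmf \<Rightarrow> nat \<Rightarrow> ereal" where
  "hazard_rate T j =
     (if measure_pmf.prob T {j<..} = 0 then \<infinity>
      else ereal (pmf T j / measure_pmf.prob T {j<..}))"

definition hr_le :: "nat pmf \<Rightarrow> nat pmf \<Rightarrow> bool" where
  "hr_le T U \<longleftrightarrow> (\<forall>j. hazard_rate T j \<ge> hazard_rate U j)"

definition dTV :: "nat pmf \<Rightarrow> nat pmf \<Rightarrow> real" where
  "dTV U V = (SUP A :: nat set. \<bar>measure_pmf.prob U A - measure_pmf.prob V A\<bar>)"

definition mean_ereal :: "nat pmf \<Rightarrow> ereal" where
  "mean_ereal T = enn2ereal (\<integral>\<^sup>+ x. ennreal (real x) \<partial>measure_pmf T)"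

end

theory Submission imports Defs begin

text \<open>Write \<open>S\<close> for the survival function \<open>S j = P(T > j)\<close>. The geometric law has
  \<open>S_N j = (1 - p)^(j+1)\<close>, hence constant hazard rate \<open>p / (1 - p)\<close>, so either hazard rate
  comparison says that \<open>S_W (j+1) - (1 - p) S_W j\<close> has constant sign. Then the gap
  \<open>G j = \<plusminus>(S_N j - S_W j)\<close> satisfies \<open>G 0 = 0\<close> and \<open>G (j+1) \<ge> (1 - p) G j\<close>, so \<open>G \<ge> 0\<close>, and
  the pointwise differences of the mass functions at \<open>j + 1\<close> are bounded by \<open>p G j\<close>. Summing,
  the total variation distance is at most \<open>p \<Sum>j. G j = \<bar>p (E N - E W)\<bar>\<close>, and \<open>p E N = 1 - p\<close>.\<close>

abbreviation survival :: "nat pmf \<Rightarrow> nat \<Rightarrow> real" where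
  "survival T j \<equiv> measure_pmf.prob T {j<..}"

lemma prob_Compl_pmf: "measure_pmf.prob T (UNIV - A) = 1 - measure_pmf.prob T A"
  using measure_pmf.prob_compl[of A T] by simp

lemma survival_eq: "survival T j = 1 - (\<Sum>i\<le>j. pmf T i)"
proof -
  have "{j<..} = UNIV - {..j}" by auto
  then show ?thesis
    by (simp add: prob_Compl_pmf measure_measure_pmf_finite)
qed

lemma survival_0: "survival T 0 = 1 - pmf T 0"
  by (simp add: survival_eq)

lemma survival_Suc: "survival T j = pmf T (Suc j) + survival T (Suc j)"
  by (simp add: survival_eq)

lemma nn_integral_nat_eq_suminf_survival:
  "(\<integral>\<^sup>+x. ennreal (real x) \<partial>measure_pmf T) = (\<Sum>j. ennreal (survival T j))"
proof -
  have count: "ennreal (real x) = (\<Sum>j. indicator {j<..} x)" for x :: nat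
  proof -
    have "(\<Sum>j. indicator {j<..} x :: ennreal) = (\<Sum>j<x. indicator {j<..} x)"
      by (rule suminf_finite) auto
    also have "\<dots> = (\<Sum>j<x. 1)" by (rule sum.cong) auto
    finally show ?thesis by (simp add: ennreal_of_nat_eq_real_of_nat)
  qed
  have "(\<integral>\<^sup>+x. ennreal (real x) \<partial>measure_pmf T)
      = (\<Sum>j. \<integral>\<^sup>+x. indicator {j<..} x \<partial>measure_pmf T)"
    unfolding count by (rule nn_integral_suminf) simp
  also have "\<dots> = (\<Sum>j. ennreal (survival T j))"
    by (simp add: measure_pmf.emeasure_eq_measure)
  finally show ?thesis .
qed

lemma mean_ereal_eq_survival_sum:
  "mean_ereal T = (if summable (survival T) then ereal (\<Sum>j. survival T j) else \<infinity>)"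
proof (cases "summable (survival T)")
  case True
  then show ?thesis
    unfolding mean_ereal_def nn_integral_nat_eq_suminf_survival
    by (subst suminf_ennreal2) (auto simp: measure_nonneg suminf_nonneg)
next
  case False
  have "(\<Sum>j. ennreal (survival T j)) = \<top>"
  proof (rule ccontr)
    assume "(\<Sum>j. ennreal (survival T j)) \<noteq> \<top>"
    then have "summable (survival T)"
      by (intro summable_suminf_not_top) (simp_all add: measure_nonneg)
    with False show False ..
  qed
  with False show ?thesis
    by (simp add: mean_ereal_def nn_integral_nat_eq_suminf_survival)
qed

lemma dTV_commute: "dTV X Y = dTV Y X"
  unfolding dTV_def by (simp add: abs_minus_commute)

lemma dTV_le_sums:
  fixes X Y :: "nat pmf" and c :: "nat \<Rightarrow> real"
  assumes dominated: "\<And>j. pmf Y j - pmf X j \<le> c j"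
    and c_nonneg: "\<And>j. 0 \<le> c j"
    and c_sums: "c sums s"
  shows "dTV X Y \<le> s"
  unfolding dTV_def
proof (rule cSUP_least)
  have c_abs: "Infinite_Set_Sum.abs_summable_on c UNIV"
    using c_nonneg sums_summable[OF c_sums] by (simp add: abs_summable_on_nat_iff')
  have diff: "measure_pmf.prob Y A - measure_pmf.prob X A \<le> s" for A
  proof -
    have "measure_pmf.prob Y A - measure_pmf.prob X A = infsetsum (\<lambda>j. pmf Y j - pmf X j) A"
      by (simp add: measure_pmf_conv_infsetsum infsetsum_diff[OF pmf_abs_summable pmf_abs_summable])
    also have "\<dots> \<le> infsetsum c UNIV"
      by (rule infsetsum_mono_neutral_left) (use dominated c_nonneg c_abs in auto)
    also have "\<dots> = suminf c"
      using c_abs by (simp add: infsetsum_nat')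
    also have "\<dots> = s"
      using c_sums by (rule sums_unique[symmetric])
    finally show ?thesis .
  qed
  fix A :: "nat set"
  show "\<bar>measure_pmf.prob X A - measure_pmf.prob Y A\<bar> \<le> s"
    using diff[of A] diff[of "UNIV - A"] by (simp add: prob_Compl_pmf)
qed simp

lemma dTV_le_survival_gap:
  fixes X Y :: "nat pmf" and p a b :: real
  assumes p: "0 \<le> p" "p \<le> 1"
    and same_atom: "pmf X 0 = pmf Y 0"
    and gap_growth: "\<And>j. (1 - p) * (survival Y j - survival X j)
                          \<le> survival Y (Suc j) - survival X (Suc j)"
    and X_sums: "survival X sums a" and Y_sums: "survival Y sums b"
  shows "dTV X Y \<le> p * (b - a)"
proof -
  define G where "G j = survival Y j - survival X j" for j
  have G_nonneg: "0 \<le> G j" for j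
  proof (induction j)
    case 0
    show ?case using same_atom by (simp add: G_def survival_0)
  next
    case (Suc j)
    have "0 \<le> (1 - p) * G j" using Suc p by simp
    also have "\<dots> \<le> G (Suc j)" using gap_growth by (simp add: G_def)
    finally show ?case .
  qed
  define c where "c j = (case j of 0 \<Rightarrow> 0 | Suc i \<Rightarrow> p * G i)" for j
  have "pmf Y j - pmf X j \<le> c j" for j
  proof (cases j)
    case (Suc i)
    have "survival X i = pmf X (Suc i) + survival X (Suc i)"
         "survival Y i = pmf Y (Suc i) + survival Y (Suc i)"
      by (rule survival_Suc)+
    with Suc gap_growth[of i] show ?thesis
      by (simp add: c_def G_def algebra_simps)
  qed (simp add: c_def same_atom)
  moreover have "0 \<le> c j" for j
    using G_nonneg p by (simp add: c_def split: nat.split)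
  moreover have "c sums (p * (b - a))"
  proof -
    have "(\<lambda>i. p * G i) sums (p * (b - a))"
      unfolding G_def by (intro sums_mult sums_diff Y_sums X_sums)
    moreover have "(\<lambda>i. c (Suc i)) = (\<lambda>i. p * G i)" "c 0 = 0" by (simp_all add: c_def)
    ultimately show ?thesis using sums_Suc_iff[of c] by simp
  qed
  ultimately show ?thesis by (rule dTV_le_sums)
qed

lemma survival_geometric:
  assumes "0 < p" "p \<le> 1"
  shows "survival (geometric_pmf p) j = (1 - p) ^ Suc j"
proof (induction j)
  case 0
  show ?case using assms by (simp add: survival_0)
next
  case (Suc j)
  with survival_Suc[of "geometric_pmf p" j] assms show ?case
    by (simp add: algebra_simps)
qed

lemma survival_geometric_sums:
  assumes "0 < p" "p \<le> 1"
  shows "survival (geometric_pmf p) sums ((1 - p) / p)"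
proof -
  have "(\<lambda>j. (1 - p) * (1 - p) ^ j) sums ((1 - p) * (1 / (1 - (1 - p))))"
    using assms by (intro sums_mult geometric_sums) simp
  with assms show ?thesis
    by (simp add: survival_geometric)
qed

lemma hazard_rate_geometric:
  assumes "0 < p" "p < 1"
  shows "hazard_rate (geometric_pmf p) j = ereal (p / (1 - p))"
proof -
  have "(1 - p) ^ j * p / (1 - p) ^ Suc j = p / (1 - p)"
    using assms by (simp add: field_simps)
  with assms show ?thesis
    unfolding hazard_rate_def by (simp add: survival_geometric)
qed

lemma survival_Suc_le_of_hr_le_geometric:
  assumes "hr_le W (geometric_pmf p)" "0 < p" "p < 1"
  shows "survival W (Suc j) \<le> (1 - p) * survival W j"
proof (cases "survival W (Suc j) = 0")
  case True
  then show ?thesis using assms by (simp add: measure_nonneg)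
next
  case False
  then have pos: "0 < survival W (Suc j)"
    by (simp add: order_le_neq_trans measure_nonneg)
  have "ereal (p / (1 - p)) \<le> hazard_rate W (Suc j)"
    using assms hazard_rate_geometric unfolding hr_le_def by metis
  with False have "p / (1 - p) \<le> pmf W (Suc j) / survival W (Suc j)"
    unfolding hazard_rate_def by simp
  with pos assms have "p * survival W (Suc j) \<le> (1 - p) * pmf W (Suc j)"
    by (simp add: field_simps)
  then show ?thesis
    using survival_Suc[of W j] by (simp add: algebra_simps)
qed

lemma survival_Suc_ge_of_geometric_hr_le:
  assumes "hr_le (geometric_pmf p) W" "0 < p" "p < 1"
  shows "(1 - p) * survival W j \<le> survival W (Suc j)"
proof -
  have hazard: "hazard_rate W (Suc j) \<le> ereal (p / (1 - p))"
    using assms hazard_rate_geometric unfolding hr_le_def by metis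
  then have "survival W (Suc j) \<noteq> 0"
    unfolding hazard_rate_def by auto
  then have pos: "0 < survival W (Suc j)"
    by (simp add: order_le_neq_trans measure_nonneg)
  with hazard have "pmf W (Suc j) / survival W (Suc j) \<le> p / (1 - p)"
    unfolding hazard_rate_def by simp
  with pos assms have "(1 - p) * pmf W (Suc j) \<le> p * survival W (Suc j)"
    by (simp add: field_simps)
  then show ?thesis
    using survival_Suc[of W j] by (simp add: algebra_simps)
qed

lemma dTV_geometric_le_mean_gap:
  fixes W :: "nat pmf" and E :: real
  defines "p \<equiv> pmf W 0"
  assumes p_pos: "0 < p"
    and hr: "hr_le W (geometric_pmf p) \<or> hr_le (geometric_pmf p) W"
    and W_sums: "survival W sums E"
  shows "dTV W (geometric_pmf p) \<le> \<bar>1 - p * (1 + E)\<bar>"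
proof -
  define N where "N = geometric_pmf p"
  have p_le_1: "p \<le> 1" unfolding p_def by (rule pmf_le_1)
  have N_sums: "survival N sums ((1 - p) / p)"
    unfolding N_def using p_pos p_le_1 by (rule survival_geometric_sums)
  have N_survival: "survival N j = (1 - p) ^ Suc j" for j
    unfolding N_def using p_pos p_le_1 by (rule survival_geometric)
  have same_atom: "pmf W 0 = pmf N 0" using p_pos p_le_1 by (simp add: N_def p_def)
  have "dTV W N \<le> \<bar>1 - p * (1 + E)\<bar>"
  proof (cases "p < 1 \<and> hr_le W N")
    case True
    then have "survival W (Suc j) \<le> (1 - p) * survival W j" for j
      using p_pos survival_Suc_le_of_hr_le_geometric by (auto simp: N_def)
    then have "(1 - p) * (survival N j - survival W j) \<le> survival N (Suc j) - survival W (Suc j)" for j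
      by (simp add: N_survival algebra_simps)
    with p_pos p_le_1 have "dTV W N \<le> p * ((1 - p) / p - E)"
      by (intro dTV_le_survival_gap[OF _ _ same_atom _ W_sums N_sums]) auto
    also have "p * ((1 - p) / p - E) = 1 - p * (1 + E)" using p_pos by (simp add: field_simps)
    finally show ?thesis by linarith
  next
    case False
    have "(1 - p) * survival W j \<le> survival W (Suc j)" for j
    \<comment> \<open>For \<open>p = 1\<close> the hazard rate of \<open>N\<close> is infinite, but this bound is trivial.\<close>
    proof (cases "p < 1")
      case True
      with False hr have "hr_le N W" by (auto simp: N_def)
      with True p_pos show ?thesis
        unfolding N_def using survival_Suc_ge_of_geometric_hr_le by blast
    qed (use p_le_1 in \<open>simp add: measure_nonneg\<close>)
    then have "(1 - p) * (survival W j - survival N j) \<le> survival W (Suc j) - survival N (Suc j)" for j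
      by (simp add: N_survival algebra_simps)
    with p_pos p_le_1 have "dTV N W \<le> p * (E - (1 - p) / p)"
      by (intro dTV_le_survival_gap[OF _ _ same_atom[symmetric] _ N_sums W_sums]) auto
    also have "p * (E - (1 - p) / p) = - (1 - p * (1 + E))" using p_pos by (simp add: field_simps)
    finally show ?thesis by (simp add: dTV_commute)
  qed
  then show ?thesis by (simp add: N_def)
qed

theorem theorem5p2:
  fixes W :: "nat pmf"
  defines "p \<equiv> pmf W 0"
  assumes p_pos: "0 < p"
    and hr: "hr_le W (geometric_pmf p) \<or> hr_le (geometric_pmf p) W"
  shows "ereal (dTV W (geometric_pmf p)) \<le> \<bar>1 - ereal p * (1 + mean_ereal W)\<bar>"
proof (cases "summable (survival W)")
  case False
  have "\<bar>1 - \<infinity>\<bar> = (\<infinity> :: ereal)" by (simp add: one_ereal_def)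
  with False p_pos show ?thesis by (simp add: mean_ereal_eq_survival_sum)
next
  case True
  then have "dTV W (geometric_pmf p) \<le> \<bar>1 - p * (1 + (\<Sum>j. survival W j))\<bar>"
    using p_pos hr unfolding p_def by (intro dTV_geometric_le_mean_gap) (simp_all add: summable_sums)
  with True show ?thesis by (simp add: mean_ereal_eq_survival_sum one_ereal_def)
qed

end
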